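(* Let $p=4m+1$ be a prime, put $n=2m$, and let $A_0=(a_0,\ldots,a_n)\in\mathbb{F}_p^{n+1}$ satisfy $a_i^2\neq a_j^2$ for all $0\le i<j\le n$. For $u,v\in\mathbb{F}_p$ define \[ D_{A_0}(u,v)=\det\left[\chi(a_i+a_j)+\chi(a_i-a_j)+u\,\chi(a_i^2+va_j^2)\right]_{0\le i,j\le n}. \] Then \[ D_{A_0}(u,v)\equiv(-1)^{m(2m+1)}u^{2m+1}v^{m(2m+1)}\left(\prod_{r=0}^{2m}\binom{2m}{r}\right)\prod_{0\le i<j\le 2m}(a_j^2-a_i^2)^2 \pmod p. \]
   Context: $\chi(t)=\left(\frac{t}{p}\right)$ is the Legendre symbol on $\mathbb{F}_p$, with $\chi(0)=0$; the determinant is an integer and the congruence is taken modulo $p$ (equivalently, as an identity in $\mathbb{F}_p$). *)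

theory Defs
  imports "HOL-Number_Theory.Number_Theory" "Jordan_Normal_Form.Determinant"
begin

end

theory Submission
  imports Defs
begin

(* By Euler's criterion chi(t) = t^(2m) mod p, so modulo p the matrix has entries F(a_i, a_j) with
   F(alpha, beta) = (alpha + beta)^2m + (alpha - beta)^2m + u (alpha^2 + v beta^2)^2m.
   F is a polynomial G(alpha^2, beta^2) of degree at most 2m in each variable, so the matrix
   factors as V C V^T with V the Vandermonde matrix of the a_i^2 and C the coefficient matrix of G.
   After reversing its columns C is upper triangular with diagonal u binom(2m, r) v^(2m-r): the
   u-part of G lives on r + s = 2m and the rest on r + s = m. *)

lemma det_mat_scale_rows:
  "det (mat n n (\<lambda>(i, j). c i * f i j)) = (\<Prod>i<n. c i) * det (mat n n (\<lambda>(i, j). f i j))"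
proof -
  have "det (mat n n (\<lambda>(i, j). c i * f i j))
      = (\<Sum>p | p permutes {0..<n}. signof p * (\<Prod>i<n. c i * f i (p i)))"
    unfolding det_def by (auto intro!: sum.cong prod.cong simp: permutes_in_image atLeast0LessThan)
  also have "\<dots> = (\<Prod>i<n. c i) * (\<Sum>p | p permutes {0..<n}. signof p * (\<Prod>i<n. f i (p i)))"
    by (simp add: sum_distrib_left prod.distrib algebra_simps)
  also have "(\<Sum>p | p permutes {0..<n}. signof p * (\<Prod>i<n. f i (p i))) = det (mat n n (\<lambda>(i, j). f i j))"
    unfolding det_def by (auto intro!: sum.cong prod.cong simp: permutes_in_image atLeast0LessThan)
  finally show ?thesis .
qed

lemma det_exchange_mat:
  "det (mat n n (\<lambda>(i, j). if i + j = n - 1 then 1 else 0) :: 'a::comm_ring_1 mat) = (-1) ^ (\<Sum>k<n. k)"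
proof (induction n)
  case 0
  show ?case by (simp add: det_def)
next
  case (Suc n)
  define R :: "'a mat" where "R = mat (Suc n) (Suc n) (\<lambda>(i, j). if i + j = n then 1 else 0)"
  have "det R = (\<Sum>j<Suc n. R $$ (0, j) * cofactor R 0 j)"
    by (rule laplace_expansion_row) (simp_all add: R_def)
  also have "\<dots> = cofactor R 0 n"
    by (subst sum.lessThan_Suc) (simp add: R_def)
  also have "mat_delete R 0 n = mat n n (\<lambda>(i, j). if i + j = n - 1 then 1 else 0)"
    by (rule eq_matI) (auto simp: R_def mat_delete_def)
  then have "cofactor R 0 n = (-1) ^ n * (-1) ^ (\<Sum>k<n. k)"
    using Suc.IH by (simp add: cofactor_def)
  finally show ?case
    by (simp add: R_def power_add mult.commute)
qed

lemma det_reverse_cols: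
  fixes A :: "'a::comm_ring_1 mat"
  assumes A: "A \<in> carrier_mat n n"
  shows "det (mat n n (\<lambda>(i, j). A $$ (i, n - 1 - j))) = (-1) ^ (\<Sum>k<n. k) * det A"
proof -
  define R :: "'a mat" where "R = mat n n (\<lambda>(i, j). if i + j = n - 1 then 1 else 0)"
  have R: "R \<in> carrier_mat n n" by (simp add: R_def)
  have det_R: "det R = (-1) ^ (\<Sum>k<n. k)"
    unfolding R_def by (rule det_exchange_mat)
  have AR: "mat n n (\<lambda>(i, j). A $$ (i, n - 1 - j)) = A * R"
  proof (rule eq_matI)
    fix i j assume "i < dim_row (A * R)" "j < dim_col (A * R)"
    then have i: "i < n" and j: "j < n" using A by (auto simp: R_def)
    have "(A * R) $$ (i, j) = (\<Sum>k\<in>{0..<n}. A $$ (i, k) * (if k + j = n - 1 then 1 else 0))"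
      using A i j by (simp add: R_def scalar_prod_def)
    also have "\<dots> = (\<Sum>k\<in>{0..<n}. if k = n - 1 - j then A $$ (i, k) else 0)"
      using j by (intro sum.cong) auto
    finally show "mat n n (\<lambda>(i, j). A $$ (i, n - 1 - j)) $$ (i, j) = (A * R) $$ (i, j)"
      using i j by simp
  qed (use A in \<open>auto simp: R_def\<close>)
  show ?thesis
    unfolding AR det_mult[OF A R] det_R by (rule mult.commute)
qed

lemma vandermonde_column_reduction:
  fixes x :: "nat \<Rightarrow> 'a::comm_ring_1"
  shows "mat (Suc n) (Suc n) (\<lambda>(i, j). x i ^ j)
           * mat (Suc n) (Suc n) (\<lambda>(k, j). if k = j then 1 else if j = Suc k then - x 0 else 0)
       = mat (Suc n) (Suc n) (\<lambda>(i, j). if j = 0 then 1 else (x i - x 0) * x i ^ (j - 1))"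
    (is "?A * ?E = ?B")
proof (rule eq_matI)
  fix i j assume "i < dim_row ?B" "j < dim_col ?B"
  then have i: "i < Suc n" and j: "j < Suc n" by simp_all
  have "(?A * ?E) $$ (i, j) = (\<Sum>k<Suc n. x i ^ k * (if k = j then 1 else if j = Suc k then - x 0 else 0))"
    using i j by (simp add: scalar_prod_def lessThan_atLeast0)
  also have "\<dots> = (\<Sum>k<Suc n. if k = j then x i ^ k else 0) + (\<Sum>k<Suc n. if Suc k = j then - x 0 * x i ^ k else 0)"
    by (subst sum.distrib[symmetric]) (rule sum.cong, auto)
  also have "\<dots> = ?B $$ (i, j)"
  proof (cases j)
    case (Suc l)
    then show ?thesis using i j by (simp add: algebra_simps del: sum.lessThan_Suc)
  qed (use i in simp)
  finally show "(?A * ?E) $$ (i, j) = ?B $$ (i, j)" .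
qed simp_all

lemma det_vandermonde:
  fixes x :: "nat \<Rightarrow> 'a::comm_ring_1"
  shows "det (mat n n (\<lambda>(i, j). x i ^ j)) = (\<Prod>j<n. \<Prod>i<j. x j - x i)"
proof (induction n arbitrary: x)
  case 0
  show ?case by (simp add: det_def)
next
  case (Suc n)
  define A where "A = mat (Suc n) (Suc n) (\<lambda>(i, j). x i ^ j)"
  define E where "E = mat (Suc n) (Suc n) (\<lambda>(k, j). if k = j then 1 else if j = Suc k then - x 0 else 0)"
  define B where "B = mat (Suc n) (Suc n) (\<lambda>(i, j). if j = 0 then 1 else (x i - x 0) * x i ^ (j - 1))"
  have A: "A \<in> carrier_mat (Suc n) (Suc n)" and E: "E \<in> carrier_mat (Suc n) (Suc n)"
    and B: "B \<in> carrier_mat (Suc n) (Suc n)" by (auto simp: A_def B_def E_def)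
  have "det E = prod_list (diag_mat E)"
    by (rule det_upper_triangular[OF _ E]) (auto simp: upper_triangular_def E_def)
  also have "\<dots> = 1"
    unfolding prod_list_diag_prod by (rule prod.neutral) (simp add: E_def)
  finally have "det A = det B"
    using det_mult[OF A E] vandermonde_column_reduction[of n x] by (simp add: A_def E_def B_def)
  also have "det B = (\<Sum>j<Suc n. B $$ (0, j) * cofactor B 0 j)"
    by (rule laplace_expansion_row[OF B]) simp
  also have "\<dots> = cofactor B 0 0"
    by (subst sum.lessThan_Suc_shift) (simp add: B_def)
  also have "\<dots> = det (mat n n (\<lambda>(i, j). (x (Suc i) - x 0) * x (Suc i) ^ j))"
    unfolding cofactor_def
    by (simp, rule arg_cong[where f=det], rule eq_matI) (auto simp: mat_delete_def B_def)
  also have "\<dots> = (\<Prod>i<n. x (Suc i) - x 0) * (\<Prod>j<n. \<Prod>i<j. x (Suc j) - x (Suc i))"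
    by (simp add: det_mat_scale_rows Suc.IH)
  also have "\<dots> = (\<Prod>j<Suc n. \<Prod>i<j. x j - x i)"
    by (subst prod.lessThan_Suc_shift, subst prod.lessThan_Suc_shift) (simp add: prod.distrib)
  finally show ?case by (simp add: A_def)
qed

lemma bilinear_form_mat_factor:
  fixes c :: "nat \<Rightarrow> nat \<Rightarrow> 'a::comm_ring_1"
  shows "mat n n (\<lambda>(i, j). \<Sum>r<n. \<Sum>s<n. c r s * x i ^ r * y j ^ s)
       = mat n n (\<lambda>(i, r). x i ^ r) * mat n n (\<lambda>(r, s). c r s) * (mat n n (\<lambda>(j, s). y j ^ s))\<^sup>T"
    (is "?M = ?P")
proof (rule eq_matI)
  fix i j assume "i < dim_row ?P" "j < dim_col ?P"
  then have i: "i < n" and j: "j < n" by simp_all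
  have "?P $$ (i, j) = (\<Sum>s<n. (\<Sum>r<n. x i ^ r * c r s) * y j ^ s)"
    using i j by (simp add: scalar_prod_def lessThan_atLeast0)
  also have "\<dots> = (\<Sum>s<n. \<Sum>r<n. c r s * x i ^ r * y j ^ s)"
    by (simp add: sum_distrib_left sum_distrib_right mult_ac)
  also have "\<dots> = (\<Sum>r<n. \<Sum>s<n. c r s * x i ^ r * y j ^ s)"
    by (rule sum.swap)
  finally show "?M $$ (i, j) = ?P $$ (i, j)"
    using i j by simp
qed simp_all

lemma det_bilinear_form:
  fixes c :: "nat \<Rightarrow> nat \<Rightarrow> 'a::comm_ring_1"
  shows "det (mat n n (\<lambda>(i, j). \<Sum>r<n. \<Sum>s<n. c r s * x i ^ r * y j ^ s))
       = (\<Prod>j<n. \<Prod>i<j. x j - x i) * det (mat n n (\<lambda>(r, s). c r s)) * (\<Prod>j<n. \<Prod>i<j. y j - y i)"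
proof -
  have X: "mat n n (\<lambda>(i, r). x i ^ r) \<in> carrier_mat n n"
    and C: "mat n n (\<lambda>(r, s). c r s) \<in> carrier_mat n n"
    and Y: "mat n n (\<lambda>(j, s). y j ^ s) \<in> carrier_mat n n" by simp_all
  show ?thesis
    unfolding bilinear_form_mat_factor det_mult[OF mult_carrier_mat[OF X C] transpose_carrier_mat[THEN iffD2, OF Y]]
      det_mult[OF X C] det_transpose[OF Y] det_vandermonde ..
qed

lemma binomial_plus_minus_even:
  fixes \<alpha> \<beta> :: "'a::comm_ring_1"
  shows "(\<alpha> + \<beta>) ^ (2*m) + (\<alpha> - \<beta>) ^ (2*m)
       = (\<Sum>r\<le>m. 2 * of_nat (2*m choose (2*r)) * (\<alpha>^2) ^ r * (\<beta>^2) ^ (m - r))"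
proof -
  define f where "f k = of_nat (2*m choose k) * \<alpha>^k * \<beta>^(2*m - k) * (1 + (-1)^k)" for k
  have "(\<alpha> - \<beta>) ^ (2*m) = (-\<alpha> + \<beta>) ^ (2*m)"
    using power_minus_even[where a = "-\<alpha> + \<beta>" and n = "2*m"] by simp
  also have "\<dots> = (\<Sum>k\<le>2*m. of_nat (2*m choose k) * (-\<alpha>)^k * \<beta>^(2*m - k))"
    by (rule binomial_ring)
  finally have "(\<alpha> + \<beta>) ^ (2*m) + (\<alpha> - \<beta>) ^ (2*m)
      = (\<Sum>k\<le>2*m. of_nat (2*m choose k) * \<alpha>^k * \<beta>^(2*m - k) + of_nat (2*m choose k) * (-\<alpha>)^k * \<beta>^(2*m - k))"
    by (simp only: binomial_ring sum.distrib)
  also have "\<dots> = (\<Sum>k\<le>2*m. f k)"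
    by (rule sum.cong) (simp_all add: f_def power_minus[of \<alpha>] distrib_left)
  also have "\<dots> = (\<Sum>k\<le>Suc (2*m). f k)"
    by (simp add: f_def)
  also have "\<dots> = (\<Sum>r\<le>m. f (2*r) + f (Suc (2*r)))"
    by (rule sum.in_pairs_0)
  also have "\<dots> = (\<Sum>r\<le>m. 2 * of_nat (2*m choose (2*r)) * (\<alpha>^2) ^ r * (\<beta>^2) ^ (m - r))"
  proof (rule sum.cong)
    fix r assume "r \<in> {..m}"
    then have "2*m - 2*r = 2*(m - r)" by simp
    then show "f (2*r) + f (Suc (2*r)) = 2 * of_nat (2*m choose (2*r)) * (\<alpha>^2) ^ r * (\<beta>^2) ^ (m - r)"
      by (simp add: f_def power_mult)
  qed simp
  finally show ?thesis .
qed

definition kernel_coeff :: "nat \<Rightarrow> 'a \<Rightarrow> 'a \<Rightarrow> nat \<Rightarrow> nat \<Rightarrow> 'a::comm_ring_1" where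
  "kernel_coeff m u v r s =
     (if s = 2*m - r then u * of_nat (2*m choose r) * v ^ s else 0)
     + (if s = m - r then if r \<le> m then 2 * of_nat (2*m choose (2*r)) else 0 else 0)"

lemma kernel_coeff_expansion:
  fixes x y u v :: "'a::comm_ring_1"
  shows "(\<Sum>r<2*m+1. \<Sum>s<2*m+1. kernel_coeff m u v r s * x ^ r * y ^ s)
       = u * (x + v * y) ^ (2*m) + (\<Sum>r\<le>m. 2 * of_nat (2*m choose (2*r)) * x ^ r * y ^ (m - r))"
proof -
  have row: "(\<Sum>s<2*m+1. kernel_coeff m u v r s * x ^ r * y ^ s)
      = u * of_nat (2*m choose r) * v ^ (2*m - r) * x ^ r * y ^ (2*m - r)
        + (if r \<le> m then 2 * of_nat (2*m choose (2*r)) * x ^ r * y ^ (m - r) else 0)" for r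
  proof -
    have "(\<Sum>s<2*m+1. kernel_coeff m u v r s * x ^ r * y ^ s)
        = (\<Sum>s<2*m+1. if s = 2*m - r then u * of_nat (2*m choose r) * v ^ s * x ^ r * y ^ s else 0)
        + (\<Sum>s<2*m+1. if s = m - r then
             if r \<le> m then 2 * of_nat (2*m choose (2*r)) * x ^ r * y ^ s else 0 else 0)"
      unfolding sum.distrib[symmetric] by (rule sum.cong) (simp_all add: kernel_coeff_def distrib_right)
    moreover have "2*m - r \<in> {..<2*m+1}" "m - r \<in> {..<2*m+1}" by auto
    ultimately show ?thesis
      by (simp only: sum.delta finite_lessThan if_True)
  qed
  have "(\<Sum>r<2*m+1. if r \<le> m then 2 * of_nat (2*m choose (2*r)) * x ^ r * y ^ (m - r) else 0)
      = (\<Sum>r\<in>{r \<in> {..<2*m+1}. r \<le> m}. 2 * of_nat (2*m choose (2*r)) * x ^ r * y ^ (m - r))"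
    by (rule sum.inter_filter[symmetric]) simp
  also have "{r \<in> {..<2*m+1}. r \<le> m} = {..m}" by auto
  finally have even_part: "(\<Sum>r<2*m+1. if r \<le> m then 2 * of_nat (2*m choose (2*r)) * x ^ r * y ^ (m - r) else 0)
      = (\<Sum>r\<le>m. 2 * of_nat (2*m choose (2*r)) * x ^ r * y ^ (m - r))" .
  have "u * (x + v * y) ^ (2*m) = (\<Sum>r\<le>2*m. u * (of_nat (2*m choose r) * x ^ r * (v * y) ^ (2*m - r)))"
    by (simp only: binomial_ring sum_distrib_left)
  also have "\<dots> = (\<Sum>r<2*m+1. u * of_nat (2*m choose r) * v ^ (2*m - r) * x ^ r * y ^ (2*m - r))"
    unfolding Suc_eq_plus1[symmetric] lessThan_Suc_atMost
    by (rule sum.cong) (simp_all add: power_mult_distrib mult_ac)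
  finally have binomial_part: "(\<Sum>r<2*m+1. u * of_nat (2*m choose r) * v ^ (2*m - r) * x ^ r * y ^ (2*m - r))
      = u * (x + v * y) ^ (2*m)" ..
  show ?thesis
    by (simp only: row sum.distrib binomial_part even_part)
qed

lemma kernel_expansion:
  fixes \<alpha> \<beta> u v :: "'a::comm_ring_1"
  shows "(\<alpha> + \<beta>) ^ (2*m) + (\<alpha> - \<beta>) ^ (2*m) + u * (\<alpha>^2 + v * \<beta>^2) ^ (2*m)
       = (\<Sum>r<2*m+1. \<Sum>s<2*m+1. kernel_coeff m u v r s * (\<alpha>^2) ^ r * (\<beta>^2) ^ s)"
proof -
  have "(\<alpha> + \<beta>) ^ (2*m) + (\<alpha> - \<beta>) ^ (2*m) + u * (\<alpha>^2 + v * \<beta>^2) ^ (2*m)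
      = u * (\<alpha>^2 + v * \<beta>^2) ^ (2*m) + ((\<alpha> + \<beta>) ^ (2*m) + (\<alpha> - \<beta>) ^ (2*m))"
    by (rule add.commute)
  also have "\<dots> = (\<Sum>r<2*m+1. \<Sum>s<2*m+1. kernel_coeff m u v r s * (\<alpha>^2) ^ r * (\<beta>^2) ^ s)"
    by (simp only: kernel_coeff_expansion binomial_plus_minus_even)
  finally show ?thesis .
qed

lemma sum_lessThan_odd: "(\<Sum>k<2*m+1. k) = m * (2*m + 1 :: nat)"
  by (induction m) (simp_all add: algebra_simps)

lemma det_kernel_coeff:
  fixes u v :: "'a::comm_ring_1"
  assumes "m \<ge> 1"
  shows "det (mat (2*m+1) (2*m+1) (\<lambda>(r, s). kernel_coeff m u v r s))
       = (-1) ^ (m*(2*m+1)) * u ^ (2*m+1) * v ^ (m*(2*m+1)) * (\<Prod>r<2*m+1. of_nat (2*m choose r))"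
proof -
  define T where "T = mat (2*m+1) (2*m+1) (\<lambda>(r, s). kernel_coeff m u v r (2*m - s))"
  have T: "T \<in> carrier_mat (2*m+1) (2*m+1)" by (simp add: T_def)
  have "mat (2*m+1) (2*m+1) (\<lambda>(r, s). kernel_coeff m u v r s)
      = mat (2*m+1) (2*m+1) (\<lambda>(r, s). T $$ (r, 2*m+1 - 1 - s))"
    by (rule eq_matI) (auto simp: T_def)
  then have reversed: "det (mat (2*m+1) (2*m+1) (\<lambda>(r, s). kernel_coeff m u v r s))
      = (-1) ^ (m*(2*m+1)) * det T"
    by (simp only: det_reverse_cols[OF T] sum_lessThan_odd)
  \<comment> \<open>with m \<ge> 1, the coefficients of (a i + a j)^2m + (a i - a j)^2m lie strictly above the diagonal\<close>
  have "det T = prod_list (diag_mat T)"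
    using assms by (intro det_upper_triangular[OF _ T]) (auto simp: upper_triangular_def T_def kernel_coeff_def)
  also have "\<dots> = (\<Prod>r<2*m+1. T $$ (r, r))"
    using T by (simp add: prod_list_diag_prod atLeast0LessThan)
  also have "\<dots> = (\<Prod>r<2*m+1. u * of_nat (2*m choose r) * v ^ (2*m - r))"
    using assms by (intro prod.cong) (auto simp: T_def kernel_coeff_def)
  also have "\<dots> = u ^ (2*m+1) * (\<Prod>r<2*m+1. of_nat (2*m choose r)) * v ^ (\<Sum>r<2*m+1. 2*m+1 - Suc r)"
    by (simp add: prod.distrib power_sum)
  also have "(\<Sum>r<2*m+1. 2*m+1 - Suc r) = m*(2*m+1)"
    by (simp only: sum.nat_diff_reindex[where g = "\<lambda>r. r"] sum_lessThan_odd)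
  finally show ?thesis
    by (subst reversed) (simp only: mult_ac)
qed

lemma det_kernel_mat:
  fixes a :: "nat \<Rightarrow> 'a::comm_ring_1"
  assumes "m \<ge> 1"
  shows "det (mat (2*m+1) (2*m+1)
           (\<lambda>(i, j). (a i + a j) ^ (2*m) + (a i - a j) ^ (2*m) + u * (a i^2 + v * a j^2) ^ (2*m)))
       = (-1) ^ (m*(2*m+1)) * u ^ (2*m+1) * v ^ (m*(2*m+1)) * (\<Prod>r<2*m+1. of_nat (2*m choose r))
         * (\<Prod>j<2*m+1. \<Prod>i<j. (a j^2 - a i^2)^2)"
proof -
  let ?\<Delta> = "\<Prod>j<2*m+1. \<Prod>i<j. a j^2 - a i^2"
  have "det (mat (2*m+1) (2*m+1)
           (\<lambda>(i, j). (a i + a j) ^ (2*m) + (a i - a j) ^ (2*m) + u * (a i^2 + v * a j^2) ^ (2*m)))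
      = ?\<Delta> * det (mat (2*m+1) (2*m+1) (\<lambda>(r, s). kernel_coeff m u v r s)) * ?\<Delta>"
    unfolding kernel_expansion by (rule det_bilinear_form)
  also have "\<dots> = det (mat (2*m+1) (2*m+1) (\<lambda>(r, s). kernel_coeff m u v r s)) * (?\<Delta> * ?\<Delta>)"
    by (simp only: mult_ac)
  also have "?\<Delta> * ?\<Delta> = (\<Prod>j<2*m+1. \<Prod>i<j. (a j^2 - a i^2)^2)"
    by (simp only: power2_eq_square prod.distrib)
  finally show ?thesis
    by (simp only: det_kernel_coeff[OF assms])
qed

lemma det_cong:
  fixes f g :: "nat \<Rightarrow> nat \<Rightarrow> 'a::unique_euclidean_ring"
  assumes "\<And>i j. i < n \<Longrightarrow> j < n \<Longrightarrow> [f i j = g i j] (mod q)"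
  shows "[det (mat n n (\<lambda>(i, j). f i j)) = det (mat n n (\<lambda>(i, j). g i j))] (mod q)"
  unfolding det_def'[OF mat_carrier]
  by (intro cong_sum cong_mult cong_refl cong_prod) (auto simp: permutes_in_image assms)

lemma prod_pairs_lessThan:
  fixes n :: nat
  shows "(\<Prod>(i, j) \<in> {(i, j). i < j \<and> j < n}. f i j) = (\<Prod>j<n. \<Prod>i<j. f i j)"
proof -
  have pairs: "{(i, j). i < j \<and> j < n} = (\<lambda>(j, i). (i, j)) ` (SIGMA j:{..<n}. {..<j})"
    by force
  have inj: "inj_on (\<lambda>(j, i). (i, j)) (SIGMA j:{..<n}. {..<j})"
    by (auto simp: inj_on_def)
  have "(\<Prod>(i, j) \<in> {(i, j). i < j \<and> j < n}. f i j) = (\<Prod>(j, i) \<in> (SIGMA j:{..<n}. {..<j}). f i j)"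
    unfolding pairs prod.reindex[OF inj] by (simp add: comp_def case_prod_beta)
  also have "\<dots> = (\<Prod>j<n. \<Prod>i<j. f i j)"
    by (rule prod.Sigma[symmetric]) auto
  finally show ?thesis .
qed

theorem theorem1p2:
  fixes p m :: nat and a :: "nat \<Rightarrow> int" and u v :: int
  assumes "prime p" and "p = 4 * m + 1"
    and "\<forall>i j. i < j \<and> j \<le> 2 * m \<longrightarrow> \<not> [a i ^ 2 = a j ^ 2] (mod int p)"
  shows "[det (mat (2 * m + 1) (2 * m + 1)
            (\<lambda>(i, j). Legendre (a i + a j) (int p) + Legendre (a i - a j) (int p)
                       + u * Legendre (a i ^ 2 + v * a j ^ 2) (int p)))
          = (-1) ^ (m * (2 * m + 1)) * u ^ (2 * m + 1) * v ^ (m * (2 * m + 1))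
            * (\<Prod>r = 0..2 * m. int (2 * m choose r))
            * (\<Prod>(i, j) \<in> {(i, j). i < j \<and> j \<le> 2 * m}. (a j ^ 2 - a i ^ 2) ^ 2)] (mod int p)"
proof -
  have "m \<ge> 1"
    using assms(1,2) by (cases m) auto
  have euler: "[Legendre t (int p) = t ^ (2*m)] (mod int p)" for t
    using euler_criterion[of p t] assms(1,2) \<open>m \<ge> 1\<close> by simp
  have binomials: "(\<Prod>r<2*m+1. int (2*m choose r)) = (\<Prod>r = 0..2 * m. int (2 * m choose r))"
    by (simp only: atLeast0AtMost Suc_eq_plus1[symmetric] lessThan_Suc_atMost)
  have "{(i, j). i < j \<and> j \<le> 2 * m} = {(i, j). i < j \<and> j < 2*m+1}"
    by auto
  then have pairs: "(\<Prod>j<2*m+1. \<Prod>i<j. (a j^2 - a i^2)^2)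
      = (\<Prod>(i, j) \<in> {(i, j). i < j \<and> j \<le> 2 * m}. (a j ^ 2 - a i ^ 2) ^ 2)"
    by (simp only: prod_pairs_lessThan)
  have "[det (mat (2 * m + 1) (2 * m + 1)
            (\<lambda>(i, j). Legendre (a i + a j) (int p) + Legendre (a i - a j) (int p)
                       + u * Legendre (a i ^ 2 + v * a j ^ 2) (int p)))
       = det (mat (2*m+1) (2*m+1)
            (\<lambda>(i, j). (a i + a j) ^ (2*m) + (a i - a j) ^ (2*m) + u * (a i^2 + v * a j^2) ^ (2*m)))] (mod int p)"
    by (intro det_cong cong_add cong_mult cong_refl euler)
  also have "det (mat (2*m+1) (2*m+1)
            (\<lambda>(i, j). (a i + a j) ^ (2*m) + (a i - a j) ^ (2*m) + u * (a i^2 + v * a j^2) ^ (2*m)))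
      = (-1) ^ (m*(2*m+1)) * u ^ (2*m+1) * v ^ (m*(2*m+1)) * (\<Prod>r<2*m+1. int (2*m choose r))
         * (\<Prod>j<2*m+1. \<Prod>i<j. (a j^2 - a i^2)^2)"
    by (rule det_kernel_mat[OF \<open>m \<ge> 1\<close>])
  finally show ?thesis
    by (simp only: binomials pairs)
qed

end
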